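(* Let $n\ge2$ and $s\ge1$ be integers and $b\ge2$ an integer. For a degree pattern $\mathbf d=(d_1,\dots,d_s)\in\mathbb N^s$ with $d_1\ge\cdots\ge d_s\ge1$ and $d_1\ge2$, put $\delta(\mathbf d)=d_1\cdots d_s$ and $|\mathbf D(\mathbf d)|=\sum_{i=1}^s\big(\binom{d_i+n}{n}-1\big)$. Let $\mathbf d^{(b)}=(b,1,\dots,1)\in\mathbb N^s$. Then $|\mathbf D(\mathbf d^{(b)})|>|\mathbf D(\mathbf d)|$ for every such degree pattern $\mathbf d\ne\mathbf d^{(b)}$ with $\delta(\mathbf d)=b$. *)

theory Defs
  imports Main
begin

definition delta :: "nat list \<Rightarrow> nat" where
  "delta d = prod_list d"

definition Dsize :: "nat \<Rightarrow> nat list \<Rightarrow> nat" where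
  "Dsize n d = (\<Sum>i<length d. ((d ! i + n) choose n) - 1)"

definition deg_pattern :: "nat \<Rightarrow> nat list \<Rightarrow> bool" where
  "deg_pattern s d \<longleftrightarrow> length d = s \<and> sorted_wrt (\<ge>) d \<and> (\<forall>x\<in>set d. x \<ge> 1) \<and> d ! 0 \<ge> 2"

definition dpat_b :: "nat \<Rightarrow> nat \<Rightarrow> nat list" where
  "dpat_b s b = b # replicate (s - 1) 1"

end

theory Submission
  imports Defs
begin

text \<open>Write \<open>g k = (k + n choose n)\<close>, so that \<open>Dsize n d = (\<Sum>k\<leftarrow>d. g k) - s\<close>. The increments
  \<open>g (Suc k) - g k = (k + n choose (n - 1))\<close> increase strictly for \<open>n \<ge> 2\<close>, so \<open>g\<close> is strictly
  convex and \<open>g x + g y \<le> g (x + y - 1) + g 1 \<le> g (x * y) + g 1\<close>, strictly if \<open>x, y \<ge> 2\<close>.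
  Hence merging two entries of a pattern into their product (and padding with 1) never decreases
  \<open>\<Sum>k\<leftarrow>d. g k\<close>. Writing \<open>d = a # xs\<close>, first merge all of \<open>xs\<close> into its product \<open>p\<close>; if \<open>d\<close> is not
  \<open>dpat_b s b\<close> then \<open>a, p \<ge> 2\<close>, and the final merge of \<open>a\<close> and \<open>p\<close> is strict.\<close>

lemma convex_exchange_le:
  fixes f D :: "nat \<Rightarrow> 'a::ordered_ab_semigroup_add"
  assumes f_Suc: "\<And>k. f (Suc k) = f k + D k" and "mono D" and "y \<le> x"
  shows "f x + f (y + j) \<le> f (x + j) + f y"
proof (induction j)
  case 0
  show ?case by (simp add: add.commute)
next
  case (Suc j)
  have "D (y + j) \<le> D (x + j)"
    using assms(2,3) by (simp add: monoD)
  with Suc.IH have "f x + f (y + j) + D (y + j) \<le> f (x + j) + f y + D (x + j)"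
    by (rule add_mono)
  then show ?case
    by (simp add: f_Suc ac_simps)
qed

lemma convex_exchange_less:
  fixes f D :: "nat \<Rightarrow> 'a::ordered_cancel_ab_semigroup_add"
  assumes f_Suc: "\<And>k. f (Suc k) = f k + D k" and "strict_mono D" and "y < x" and "j > 0"
  shows "f x + f (y + j) < f (x + j) + f y"
proof -
  obtain i where j: "j = Suc i"
    using \<open>j > 0\<close> gr0_implies_Suc by blast
  have "f x + f (y + i) \<le> f (x + i) + f y"
    using convex_exchange_le[OF f_Suc strict_mono_mono[OF \<open>strict_mono D\<close>]] \<open>y < x\<close> by simp
  moreover have "D (y + i) < D (x + i)"
    using \<open>strict_mono D\<close> \<open>y < x\<close> by (simp add: strict_mono_less)
  ultimately have "f x + f (y + i) + D (y + i) < f (x + i) + f y + D (x + i)"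
    by (rule add_le_less_mono)
  then show ?thesis
    by (simp add: j f_Suc ac_simps)
qed

lemma choose_add_Suc:
  assumes "n \<ge> 1"
  shows "(Suc k + n choose n) = (k + n choose n) + (k + n choose (n - 1))"
  using assms by (cases n) auto

lemma strict_mono_choose_add:
  assumes "0 < m" and "m \<le> c"
  shows "strict_mono (\<lambda>k. k + c choose m)"
proof (rule strict_mono_Suc_iff[THEN iffD2], intro allI)
  fix k
  obtain m' where m: "m = Suc m'"
    using \<open>0 < m\<close> gr0_implies_Suc by blast
  have "0 < k + c choose m'"
    using m \<open>m \<le> c\<close> by simp
  then show "k + c choose m < Suc k + c choose m"
    by (simp add: m)
qed

lemma choose_sum_le_mult:
  fixes n x y :: nat
  assumes "n \<ge> 1" and "x \<ge> 1" and "y \<ge> 1"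
  shows "(x + n choose n) + (y + n choose n) \<le> (x * y + n choose n) + (1 + n choose n)"
proof -
  have "(x + n choose n) + (1 + (y - 1) + n choose n) \<le> (x + (y - 1) + n choose n) + (1 + n choose n)"
    by (rule convex_exchange_le[where f = "\<lambda>k. k + n choose n" and D = "\<lambda>k. k + n choose (n - 1)"])
      (use choose_add_Suc[OF \<open>n \<ge> 1\<close>] \<open>x \<ge> 1\<close> in \<open>auto simp: mono_def binomial_right_mono\<close>)
  moreover have "x + (y - 1) \<le> x * y"
    using \<open>x \<ge> 1\<close> \<open>y \<ge> 1\<close> by (cases y) auto
  then have "(x + (y - 1) + n choose n) \<le> (x * y + n choose n)"
    by (simp add: binomial_right_mono)
  ultimately show ?thesis
    using \<open>y \<ge> 1\<close> by simp
qed

lemma choose_sum_less_mult: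
  fixes n x y :: nat
  assumes "n \<ge> 2" and "x \<ge> 2" and "y \<ge> 2"
  shows "(x + n choose n) + (y + n choose n) < (x * y + n choose n) + (1 + n choose n)"
proof -
  have "(x + n choose n) + (1 + (y - 1) + n choose n) < (x + (y - 1) + n choose n) + (1 + n choose n)"
    by (rule convex_exchange_less[where f = "\<lambda>k. k + n choose n" and D = "\<lambda>k. k + n choose (n - 1)"])
      (use choose_add_Suc strict_mono_choose_add[of "n - 1" n] assms in auto)
  moreover have "x + (y - 1) \<le> x * y"
    using \<open>x \<ge> 2\<close> \<open>y \<ge> 2\<close> by (cases y) auto
  then have "(x + (y - 1) + n choose n) \<le> (x * y + n choose n)"
    by (simp add: binomial_right_mono)
  ultimately show ?thesis
    using \<open>y \<ge> 2\<close> by simp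
qed

lemma sum_list_le_prod_list:
  fixes f :: "nat \<Rightarrow> nat"
  assumes merge: "\<And>x y. 1 \<le> x \<Longrightarrow> 1 \<le> y \<Longrightarrow> f x + f y \<le> f (x * y) + f 1"
    and "\<forall>x\<in>set xs. 1 \<le> x"
  shows "sum_list (map f xs) + f 1 \<le> f (prod_list xs) + length xs * f 1"
  using \<open>\<forall>x\<in>set xs. 1 \<le> x\<close>
proof (induction xs)
  case Nil
  then show ?case by simp
next
  case (Cons a xs)
  have "prod_list xs \<noteq> 0"
    using Cons.prems by (auto simp: prod_list_zero_iff)
  then have "f a + f (prod_list xs) \<le> f (a * prod_list xs) + f 1"
    using Cons.prems by (intro merge) auto
  then show ?case
    using Cons by simp
qed

lemma prod_list_eq_1_nat:
  "prod_list (xs :: nat list) = 1 \<Longrightarrow> xs = replicate (length xs) 1"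
  by (induction xs) auto

lemma Dsize_add_length:
  "Dsize n d + length d = (\<Sum>k\<leftarrow>d. k + n choose n)"
proof -
  have "Dsize n d + length d = (\<Sum>i<length d. (d ! i + n choose n) - 1 + 1)"
    unfolding Dsize_def sum.distrib by simp
  also have "\<dots> = (\<Sum>i<length d. d ! i + n choose n)"
    by (intro sum.cong) (simp_all add: Suc_le_eq)
  finally show ?thesis
    by (simp add: sum_list_sum_nth atLeast0LessThan)
qed

theorem lemma5p1:
  fixes n s b :: nat and d :: "nat list"
  assumes "n \<ge> 2" and "s \<ge> 1" and "b \<ge> 2"
    and "deg_pattern s d" and "d \<noteq> dpat_b s b" and "delta d = b"
  shows "Dsize n (dpat_b s b) > Dsize n d"
proof -
  define g where "g = (\<lambda>k. k + n choose n)"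
  obtain a xs where d: "d = a # xs"
    using assms(2,4) by (cases d) (auto simp: deg_pattern_def)
  have a: "a \<ge> 2" and xs: "\<forall>x\<in>set xs. 1 \<le> x" and len: "length xs = s - 1"
    and prod: "a * prod_list xs = b"
    using assms(4,6) by (auto simp: deg_pattern_def delta_def d)
  have "prod_list xs \<noteq> 1"
    using prod_list_eq_1_nat[of xs] prod len assms(5) by (auto simp: d dpat_b_def)
  moreover have "prod_list xs \<noteq> 0"
    using xs by (auto simp: prod_list_zero_iff)
  ultimately have "prod_list xs \<ge> 2"
    by linarith
  then have "g a + g (prod_list xs) < g b + g 1"
    unfolding g_def prod[symmetric] by (rule choose_sum_less_mult[OF \<open>n \<ge> 2\<close> a])
  moreover have "sum_list (map g xs) + g 1 \<le> g (prod_list xs) + (s - 1) * g 1"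
    using sum_list_le_prod_list[of g, OF _ xs] choose_sum_le_mult \<open>n \<ge> 2\<close> len
    by (simp add: g_def)
  ultimately have "sum_list (map g d) < sum_list (map g (dpat_b s b))"
    by (simp add: d dpat_b_def sum_list_replicate)
  moreover have "Dsize n e + length e = sum_list (map g e)" for e
    using Dsize_add_length[of n e] by (simp add: g_def)
  moreover have "length d = length (dpat_b s b)"
    using len assms(2) by (simp add: d dpat_b_def)
  ultimately show ?thesis
    by (metis add_less_cancel_right)
qed

end
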